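(* Let $\mathcal{F}$ be a frame, let $C_s, C_{cut}, C_o \subseteq \mathcal{CH}$ be sets of channels such that $C_{cut}$ is an undirected cut between $C_s$ and $C_o$, and let $f$ be a function on sets of $C_s$-runs. If $\mathcal{F}$ $f$-limits $C_s$-to-$C_{cut}$ flow, then $\mathcal{F}$ $f$-limits $C_s$-to-$C_o$ flow.
   Context: A frame $\mathcal{F}$ consists of pairwise disjoint sets $\mathcal{LO}$ (locations), $\mathcal{CH}$ (channels) and $\mathcal{D}$ (data values). Each channel $c$ either has both a sender location $\mathrm{sender}(c)\in\mathcal{LO}$ and a recipient location $\mathrm{recipient}(c)\in\mathcal{LO}$ (possibly equal), or has neither. For $\ell\in\mathcal{LO}$ let $\mathrm{chans}(\ell)=\{c:\mathrm{sender}(c)=\ell \text{ or } \mathrm{recipient}(c)=\ell\}$. Each location $\ell$ carries a prefix-closed set $\mathrm{traces}(\ell)$ of finite or infinite sequences of labels $(c,v)$ with $c\in\mathrm{chans}(\ell)$, $v\in\mathcal{D}$. Fix a set $E$ of events with functions $\mathrm{chan}:E\to\mathcal{CH}$, $\mathrm{msg}:E\to\mathcal{D}$. A system of events is $\mathcal{B}=(B,\preceq)$ with $B\subseteq E$ and $\preceq$ a partial order on $B$ in which every event has only finitely many predecessors. It is an execution of $\mathcal{F}$, written $\mathcal{B}\in\mathrm{exec}(\mathcal{F})$, iff for every location $\ell$ the set $\{e\in B:\mathrm{sender}(\mathrm{chan}(e))=\ell \text{ or } \mathrm{recipient}(\mathrm{chan}(e))=\ell\}$ is linearly ordered by $\preceq$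 and, read in $\preceq$-order as the sequence of labels $(\mathrm{chan}(e),\mathrm{msg}(e))$, belongs to $\mathrm{traces}(\ell)$. For $C\subseteq\mathcal{CH}$, the restriction $\mathcal{B}|_C$ is $(\{e\in B:\mathrm{chan}(e)\in C\},\ \preceq$ restricted to that set$)$. A $C$-run is a system of events $\mathcal{A}|_C$ with $\mathcal{A}\in\mathrm{exec}(\mathcal{F})$. For $C,C'\subseteq\mathcal{CH}$ and a system of events $\mathcal{B}$, let $J_{C}^{C'}(\mathcal{B})=\{\mathcal{A}|_{C'}:\mathcal{A}\in\mathrm{exec}(\mathcal{F}),\ \mathcal{A}|_C=\mathcal{B}\}$ (the $C'$-runs compatible with $\mathcal{B}$). The undirected graph of $\mathcal{F}$ has vertices $\mathcal{LO}$; an undirected path is a sequence of locations $\ell_0,\dots,\ell_n$ together with channels $c_1,\dots,c_n$ where each $c_k$ has endpoints $\ell_{k-1},\ell_k$ in some direction; the path traverses the $c_k$. $C_{cut}$ is an undirected cut between $C_s$ and $C_o$ iff $C_s,C_{cut},C_o$ are pairwise disjoint and every undirected path from a location that is an endpoint of a channel in $C_o$ to a location that is an endpoint of a channel in $C_s$ traverses some channel in $C_{cut}$. A function $f$ on sets is a blur operator iff (i) $S\subseteq f(S)$ for all $S$; (ii) $f(f(S))=f(S)$ for all $S$; (iii) $f(\bigcup_{a\in I}S_a)=\bigcup_{a\in I}f(S_a)$ for every indexed family. A set $S$ is $f$-blurred iff $f$ is a blur operator and $f(S)=S$. $\mathcal{F}$ $f$-limits $C_s$-to-$C_o$ flow iff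 $f$ is a blur operator and for every $C_o$-run $\mathcal{B}_o$ the set $J_{C_o}^{C_s}(\mathcal{B}_o)$ is $f$-blurred. *)

theory Defs
  imports Main
begin

datatype 'a seq = Fin "'a list" | Inf "nat \<Rightarrow> 'a"

fun seq_idx :: "'a seq \<Rightarrow> nat set" where
  "seq_idx (Fin xs) = {..<length xs}"
| "seq_idx (Inf f) = UNIV"

fun seq_nth :: "'a seq \<Rightarrow> nat \<Rightarrow> 'a" where
  "seq_nth (Fin xs) i = xs ! i"
| "seq_nth (Inf f) i = f i"

fun seq_prefix :: "nat \<Rightarrow> 'a seq \<Rightarrow> 'a seq" where
  "seq_prefix n (Fin xs) = Fin (take n xs)"
| "seq_prefix n (Inf f) = Fin (map f [0..<n])"

text \<open>Locations, channels and data are the (disjoint) types 'loc, 'ch, 'd.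
  ends c = Some (sender c, recipient c) if c has endpoints, None otherwise.\<close>
record ('loc, 'ch, 'd) frame =
  ends :: "'ch \<Rightarrow> ('loc \<times> 'loc) option"
  traces :: "'loc \<Rightarrow> ('ch \<times> 'd) seq set"

definition is_endpoint :: "('loc, 'ch, 'd) frame \<Rightarrow> 'loc \<Rightarrow> 'ch \<Rightarrow> bool" where
  "is_endpoint F l c \<longleftrightarrow> (\<exists>a b. ends F c = Some (a, b) \<and> (l = a \<or> l = b))"

definition chans :: "('loc, 'ch, 'd) frame \<Rightarrow> 'loc \<Rightarrow> 'ch set" where
  "chans F l = {c. is_endpoint F l c}"

definition wf_frame :: "('loc, 'ch, 'd) frame \<Rightarrow> bool" where
  "wf_frame F \<longleftrightarrow>
     (\<forall>l. \<forall>s\<in>traces F l. (\<forall>n. seq_prefix n s \<in> traces F l)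
          \<and> (\<forall>i\<in>seq_idx s. fst (seq_nth s i) \<in> chans F l))"

text \<open>Events form the type 'e (the set E), with functions chan and msg.
  A system of events is a pair (B, R) with R the partial order on B.\<close>
type_synonym 'e sys = "'e set \<times> ('e \<times> 'e) set"

definition system_of_events :: "'e sys \<Rightarrow> bool" where
  "system_of_events S \<longleftrightarrow>
     (let B = fst S; R = snd S in
        R \<subseteq> B \<times> B \<and> partial_order_on B R \<and> (\<forall>e\<in>B. finite {e'. (e', e) \<in> R}))"

definition reads_as :: "('e \<Rightarrow> 'ch) \<Rightarrow> ('e \<Rightarrow> 'd) \<Rightarrow> ('e \<times> 'e) set \<Rightarrow> 'e set
     \<Rightarrow> ('ch \<times> 'd) seq \<Rightarrow> bool" where
  "reads_as chan msg R A s \<longleftrightarrow>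
     (\<exists>g. bij_betw g (seq_idx s) A
        \<and> (\<forall>i\<in>seq_idx s. \<forall>j\<in>seq_idx s. i \<le> j \<longleftrightarrow> (g i, g j) \<in> R)
        \<and> (\<forall>i\<in>seq_idx s. seq_nth s i = (chan (g i), msg (g i))))"

definition loc_events :: "('loc, 'ch, 'd) frame \<Rightarrow> ('e \<Rightarrow> 'ch) \<Rightarrow> 'e set \<Rightarrow> 'loc \<Rightarrow> 'e set" where
  "loc_events F chan B l = {e \<in> B. is_endpoint F l (chan e)}"

definition execs :: "('loc, 'ch, 'd) frame \<Rightarrow> ('e \<Rightarrow> 'ch) \<Rightarrow> ('e \<Rightarrow> 'd) \<Rightarrow> 'e sys set" where
  "execs F chan msg = {S. system_of_events S \<and>
     (\<forall>l. let A = loc_events F chan (fst S) l in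
          total_on A (snd S) \<and> (\<exists>s\<in>traces F l. reads_as chan msg (snd S) A s))}"

definition restrict_sys :: "('e \<Rightarrow> 'ch) \<Rightarrow> 'e sys \<Rightarrow> 'ch set \<Rightarrow> 'e sys" where
  "restrict_sys chan S C =
     (let B' = {e \<in> fst S. chan e \<in> C} in (B', snd S \<inter> (B' \<times> B')))"

definition runs :: "('loc, 'ch, 'd) frame \<Rightarrow> ('e \<Rightarrow> 'ch) \<Rightarrow> ('e \<Rightarrow> 'd) \<Rightarrow> 'ch set \<Rightarrow> 'e sys set" where
  "runs F chan msg C = {restrict_sys chan A C | A. A \<in> execs F chan msg}"

definition compat :: "('loc, 'ch, 'd) frame \<Rightarrow> ('e \<Rightarrow> 'ch) \<Rightarrow> ('e \<Rightarrow> 'd) \<Rightarrow> 'ch set \<Rightarrow> 'ch set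
     \<Rightarrow> 'e sys \<Rightarrow> 'e sys set" where
  "compat F chan msg C C' B =
     {restrict_sys chan A C' | A. A \<in> execs F chan msg \<and> restrict_sys chan A C = B}"

definition undirected_path :: "('loc, 'ch, 'd) frame \<Rightarrow> 'loc list \<Rightarrow> 'ch list \<Rightarrow> bool" where
  "undirected_path F ls cs \<longleftrightarrow> length ls = Suc (length cs) \<and>
     (\<forall>k < length cs. ends F (cs ! k) = Some (ls ! k, ls ! Suc k)
                    \<or> ends F (cs ! k) = Some (ls ! Suc k, ls ! k))"

definition undirected_cut :: "('loc, 'ch, 'd) frame \<Rightarrow> 'ch set \<Rightarrow> 'ch set \<Rightarrow> 'ch set \<Rightarrow> bool" where
  "undirected_cut F Ccut Cs Co \<longleftrightarrow>
     Cs \<inter> Ccut = {} \<and> Cs \<inter> Co = {} \<and> Ccut \<inter> Co = {} \<and>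
     (\<forall>ls cs. undirected_path F ls cs
        \<and> (\<exists>c\<in>Co. is_endpoint F (hd ls) c) \<and> (\<exists>c\<in>Cs. is_endpoint F (last ls) c)
        \<longrightarrow> (\<exists>c\<in>set cs. c \<in> Ccut))"

text \<open>f is a function on sets of elements of the domain D (here: the C_s-runs);
  the blur-operator laws are required for all subsets of D.\<close>
definition blur_operator :: "'a set \<Rightarrow> ('a set \<Rightarrow> 'a set) \<Rightarrow> bool" where
  "blur_operator D f \<longleftrightarrow>
     (\<forall>S. S \<subseteq> D \<longrightarrow> S \<subseteq> f S) \<and>
     (\<forall>S. S \<subseteq> D \<longrightarrow> f (f S) = f S) \<and>
     (\<forall>\<S>. \<S> \<subseteq> Pow D \<longrightarrow> f (\<Union>\<S>) = \<Union>(f ` \<S>))"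

definition blurred :: "'a set \<Rightarrow> ('a set \<Rightarrow> 'a set) \<Rightarrow> 'a set \<Rightarrow> bool" where
  "blurred D f S \<longleftrightarrow> blur_operator D f \<and> f S = S"

definition limits_flow :: "('loc, 'ch, 'd) frame \<Rightarrow> ('e \<Rightarrow> 'ch) \<Rightarrow> ('e \<Rightarrow> 'd)
     \<Rightarrow> ('e sys set \<Rightarrow> 'e sys set) \<Rightarrow> 'ch set \<Rightarrow> 'ch set \<Rightarrow> bool" where
  "limits_flow F chan msg f Cs Co \<longleftrightarrow>
     blur_operator (runs F chan msg Cs) f \<and>
     (\<forall>Bo \<in> runs F chan msg Co. blurred (runs F chan msg Cs) f (compat F chan msg Co Cs Bo))"

end

theory Submission
  imports Defs
begin

text \<open>Let P be the set of channels reachable from C_o by undirected paths that avoid C_cut.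
  Every location touches only channels of P and of the cut, or no channel of P at all, and no
  channel of C_s lies in P. Given an execution A with A|C_o = B_o and an execution A' with
  A'|C_cut = A|C_cut, splice the events of A on P and C_cut with those of A' off P: the two
  partial orders agree on the shared events, so the union of them and their compositions is a
  partial order again, and each location sees exactly the trace it sees in A or in A'. The
  spliced execution restricts to B_o on C_o and to A'|C_s on C_s, hence
  J(C_o, C_s)(B_o) is the union of the sets J(C_cut, C_s)(B) over B in J(C_o, C_cut)(B_o).
  Each of these is f-blurred by hypothesis, and f-blurred sets are closed under unions.\<close>

text \<open>For partial orders R on A and S on B that agree on A \<inter> B, this is the least partial
  order on A \<union> B containing both.\<close>

definition order_merge :: "('a \<times> 'a) set \<Rightarrow> ('a \<times> 'a) set \<Rightarrow> ('a \<times> 'a) set" where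
  "order_merge R S = R \<union> S \<union> R O S \<union> S O R"

lemma order_merge_commute: "order_merge R S = order_merge S R"
  unfolding order_merge_def by blast

lemma finite_order_merge_predecessors:
  assumes "\<And>y. finite {x. (x, y) \<in> R}" and "\<And>y. finite {x. (x, y) \<in> S}"
  shows "finite {x. (x, y) \<in> order_merge R S}"
proof -
  have "{x. (x, y) \<in> order_merge R S} \<subseteq> {x. (x, y) \<in> R} \<union> {x. (x, y) \<in> S}
      \<union> (\<Union>z\<in>{z. (z, y) \<in> S}. {x. (x, z) \<in> R}) \<union> (\<Union>z\<in>{z. (z, y) \<in> R}. {x. (x, z) \<in> S})"
    unfolding order_merge_def by blast
  moreover have "finite \<dots>"
    using assms by auto
  ultimately show ?thesis
    by (rule finite_subset)
qed

locale agreeing_orders =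
  fixes A B :: "'a set" and R S :: "('a \<times> 'a) set"
  assumes R_on: "R \<subseteq> A \<times> A" and S_on: "S \<subseteq> B \<times> B"
    and trans_R: "trans R" and trans_S: "trans S"
    and antisym_R: "antisym R" and antisym_S: "antisym S"
    and agree: "\<And>x y. x \<in> A \<inter> B \<Longrightarrow> y \<in> A \<inter> B \<Longrightarrow> (x, y) \<in> R \<longleftrightarrow> (x, y) \<in> S"
begin

lemma agreeing_orders_swap: "agreeing_orders B A S R"
  using agreeing_orders_axioms unfolding agreeing_orders_def by blast

lemma Restr_S_subset: "Restr S A \<subseteq> R"
  using agree S_on by blast

lemma R_S_R_subset: "R O S O R \<subseteq> R"
proof -
  have "R O S O R \<subseteq> R O R O R"
    using agree R_on S_on by blast
  also have "\<dots> \<subseteq> R"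
    using trans_O_subset[OF trans_R] by (auto simp: O_assoc)
  finally show ?thesis .
qed

lemma Restr_order_merge_left: "Restr (order_merge R S) A = R"
proof -
  have "Restr (R O S) A \<subseteq> R O R" "Restr (S O R) A \<subseteq> R O R"
    using Restr_S_subset R_on by blast+
  then show ?thesis
    using Restr_S_subset R_on trans_O_subset[OF trans_R] unfolding order_merge_def by blast
qed

lemma Restr_order_merge_right: "Restr (order_merge R S) B = S"
  using agreeing_orders.Restr_order_merge_left[OF agreeing_orders_swap]
  by (simp add: order_merge_commute)

lemma order_merge_O_R_subset: "order_merge R S O R \<subseteq> order_merge R S"
proof -
  have "order_merge R S O R = R O R \<union> S O R \<union> R O S O R \<union> S O (R O R)"
    unfolding order_merge_def by (simp add: O_assoc)
  also have "\<dots> \<subseteq> R \<union> S O R"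
    using trans_O_subset[OF trans_R] R_S_R_subset relcomp_mono[of S S "R O R" R] by blast
  finally show ?thesis
    unfolding order_merge_def by blast
qed

lemma trans_order_merge: "trans (order_merge R S)"
proof -
  define M where "M = order_merge R S"
  have "M O R \<subseteq> M" "M O S \<subseteq> M"
    unfolding M_def using order_merge_O_R_subset
      agreeing_orders.order_merge_O_R_subset[OF agreeing_orders_swap]
    by (simp_all add: order_merge_commute)
  moreover have "M O M = M O (R \<union> S \<union> R O S \<union> S O R)"
    by (simp only: M_def order_merge_def)
  then have "M O M = M O R \<union> M O S \<union> (M O R) O S \<union> (M O S) O R"
    by (simp add: O_assoc)
  ultimately have "M O M \<subseteq> M"
    using relcomp_mono[of "M O R" M S S] relcomp_mono[of "M O S" M R R] by blast
  then show ?thesis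
    unfolding M_def by (auto intro!: transI)
qed

lemma order_merge_on: "order_merge R S \<subseteq> (A \<union> B) \<times> (A \<union> B)"
  using R_on S_on unfolding order_merge_def by blast

lemma order_merge_cycle_left:
  assumes xy: "(x, y) \<in> order_merge R S" and yx: "(y, x) \<in> order_merge R S"
    and "x \<in> A" "y \<notin> A"
  shows "x \<in> B"
proof -
  from xy \<open>y \<notin> A\<close> consider "(x, y) \<in> S" | z where "(x, z) \<in> R" "(z, y) \<in> S"
    using R_on unfolding order_merge_def by blast
  then show ?thesis
  proof cases
    case 1
    then show ?thesis using S_on by blast
  next
    case (2 z)
    have "(z, x) \<in> order_merge R S"
      using trans_order_merge \<open>(z, y) \<in> S\<close> yx unfolding order_merge_def by (blast dest: transD)
    then have "(z, x) \<in> R"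
      using Restr_order_merge_left \<open>(x, z) \<in> R\<close> R_on by blast
    then have "z = x"
      using \<open>(x, z) \<in> R\<close> antisym_R by (blast dest: antisymD)
    then show ?thesis
      using \<open>(z, y) \<in> S\<close> S_on by blast
  qed
qed

lemma antisym_order_merge: "antisym (order_merge R S)"
proof (rule antisymI)
  fix x y
  assume xy: "(x, y) \<in> order_merge R S" and yx: "(y, x) \<in> order_merge R S"
  interpret swap: agreeing_orders B A S R
    by (rule agreeing_orders_swap)
  have xy': "(x, y) \<in> order_merge S R" and yx': "(y, x) \<in> order_merge S R"
    using xy yx by (simp_all add: order_merge_commute)
  have "x \<in> A \<and> y \<in> A \<or> x \<in> B \<and> y \<in> B"
    using order_merge_cycle_left[OF xy yx] order_merge_cycle_left[OF yx xy]
      swap.order_merge_cycle_left[OF xy' yx'] swap.order_merge_cycle_left[OF yx' xy']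
      order_merge_on xy by blast
  then show "x = y"
    using xy yx Restr_order_merge_left Restr_order_merge_right antisym_R antisym_S
    by (blast dest: antisymD)
qed

end

lemma agreeing_orders_if_systems:
  assumes "system_of_events (A, R)" and "system_of_events (B, S)"
    and "\<And>x y. x \<in> A \<inter> B \<Longrightarrow> y \<in> A \<inter> B \<Longrightarrow> (x, y) \<in> R \<longleftrightarrow> (x, y) \<in> S"
  shows "agreeing_orders A B R S"
  using assms unfolding agreeing_orders_def system_of_events_def partial_order_on_def preorder_on_def
  by simp

lemma system_of_events_order_merge:
  assumes A: "system_of_events (A, R)" and B: "system_of_events (B, S)"
    and "agreeing_orders A B R S"
  shows "system_of_events (A \<union> B, order_merge R S)"
proof -
  interpret agreeing_orders A B R S
    by (fact assms(3))
  have "refl_on A R" "refl_on B S"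
    using A B unfolding system_of_events_def partial_order_on_def preorder_on_def by simp_all
  then have "refl_on (A \<union> B) (order_merge R S)"
    unfolding refl_on_def order_merge_def by auto
  moreover have finite_R: "finite {x. (x, y) \<in> R}" for y
  proof (cases "y \<in> A")
    case False
    then have "{x. (x, y) \<in> R} = {}" using R_on by blast
    then show ?thesis by simp
  qed (use A in \<open>simp add: system_of_events_def\<close>)
  moreover have finite_S: "finite {x. (x, y) \<in> S}" for y
  proof (cases "y \<in> B")
    case False
    then have "{x. (x, y) \<in> S} = {}" using S_on by blast
    then show ?thesis by simp
  qed (use B in \<open>simp add: system_of_events_def\<close>)
  ultimately show ?thesis
    unfolding system_of_events_def partial_order_on_def preorder_on_def
    using order_merge_on trans_order_merge antisym_order_merge
      finite_order_merge_predecessors[OF finite_R finite_S] by simp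
qed

lemma restrict_sys_altdef:
  "restrict_sys chan S C = ({e \<in> fst S. chan e \<in> C}, Restr (snd S) {e \<in> fst S. chan e \<in> C})"
  unfolding restrict_sys_def Let_def ..

lemma restrict_sys_restrict_sys:
  "restrict_sys chan (restrict_sys chan S C) C' = restrict_sys chan S (C \<inter> C')"
  unfolding restrict_sys_altdef by auto

lemma restrict_sys_eq_subset:
  assumes "C' \<subseteq> C" and "restrict_sys chan S C = restrict_sys chan T C"
  shows "restrict_sys chan S C' = restrict_sys chan T C'"
  by (metis assms restrict_sys_restrict_sys inf.absorb2)

lemma system_of_events_Restr:
  assumes "system_of_events (B, R)" and "X \<subseteq> B"
  shows "system_of_events (X, Restr R X)"
proof -
  have "refl_on B R" "trans R" "antisym R" "\<forall>e\<in>B. finite {e'. (e', e) \<in> R}"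
    using assms(1) unfolding system_of_events_def partial_order_on_def preorder_on_def by simp_all
  moreover from this(1) have "refl_on X (Restr R X)"
    using assms(2) unfolding refl_on_def by blast
  ultimately show ?thesis
    using assms(2) trans_Restr antisym_subset[of "Restr R X" R]
    unfolding system_of_events_def partial_order_on_def preorder_on_def
    by (auto intro: rev_finite_subset)
qed

lemma restrict_sys_eq_events:
  assumes "restrict_sys chan S K = restrict_sys chan T K" and "chan e \<in> K"
  shows "e \<in> fst S \<longleftrightarrow> e \<in> fst T"
proof -
  have "{e \<in> fst S. chan e \<in> K} = {e \<in> fst T. chan e \<in> K}"
    using arg_cong[OF assms(1), of fst] by (simp only: restrict_sys_altdef fst_conv)
  then show ?thesis
    using assms(2) by blast
qed

lemma restrict_sys_eq_order:
  assumes "restrict_sys chan S K = restrict_sys chan T K"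
    and "x \<in> fst S" "y \<in> fst S" "chan x \<in> K" "chan y \<in> K"
  shows "(x, y) \<in> snd S \<longleftrightarrow> (x, y) \<in> snd T"
proof -
  have "Restr (snd S) {e \<in> fst S. chan e \<in> K} = Restr (snd T) {e \<in> fst T. chan e \<in> K}"
    using arg_cong[OF assms(1), of snd] by (simp only: restrict_sys_altdef snd_conv)
  moreover have "x \<in> fst T" "y \<in> fst T"
    using restrict_sys_eq_events[OF assms(1)] assms(2-5) by blast+
  ultimately show ?thesis
    using assms(2-5) by (simp add: set_eq_iff) blast
qed

lemma loc_events_altdef: "loc_events F chan B l = {e \<in> B. chan e \<in> chans F l}"
  unfolding loc_events_def chans_def by simp

lemma execsI_locally:
  assumes "system_of_events (B, R)"
    and "\<And>l. \<exists>(B', R') \<in> execs F chan msg. loc_events F chan B l = loc_events F chan B' l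
      \<and> Restr R (loc_events F chan B' l) = Restr R' (loc_events F chan B' l)"
  shows "(B, R) \<in> execs F chan msg"
proof -
  have total_on_Restr: "total_on L R \<longleftrightarrow> total_on L (Restr R L)" for L :: "'e set" and R
    unfolding total_on_def by auto
  have reads_as_Restr: "reads_as chan msg R L s \<longleftrightarrow> reads_as chan msg (Restr R L) L s" for R L s
    unfolding reads_as_def bij_betw_def by auto
  have "total_on (loc_events F chan B l) R
    \<and> (\<exists>s\<in>traces F l. reads_as chan msg R (loc_events F chan B l) s)" for l
  proof -
    obtain B' R' where "(B', R') \<in> execs F chan msg"
      and L: "loc_events F chan B l = loc_events F chan B' l"
      and R: "Restr R (loc_events F chan B' l) = Restr R' (loc_events F chan B' l)"
      using assms(2) by blast
    then have "total_on (loc_events F chan B' l) R'"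
      "\<exists>s\<in>traces F l. reads_as chan msg R' (loc_events F chan B' l) s"
      unfolding execs_def Let_def by auto
    then show ?thesis
      unfolding L total_on_Restr[of _ R] reads_as_Restr[of R] R
      by (simp flip: total_on_Restr reads_as_Restr)
  qed
  then show ?thesis
    using assms(1) unfolding execs_def by simp
qed

lemma agreeing_orders_Restr:
  assumes "system_of_events (BA, RA)" and "system_of_events (BB, RB)"
    and "XA \<subseteq> BA" and "XB \<subseteq> BB"
    and agree: "\<And>x y. x \<in> XA \<inter> XB \<Longrightarrow> y \<in> XA \<inter> XB \<Longrightarrow> (x, y) \<in> RA \<longleftrightarrow> (x, y) \<in> RB"
  shows "agreeing_orders XA XB (Restr RA XA) (Restr RB XB)"
proof (rule agreeing_orders_if_systems)
  show "system_of_events (XA, Restr RA XA)" "system_of_events (XB, Restr RB XB)"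
    using system_of_events_Restr assms(1-4) by blast+
  show "(x, y) \<in> Restr RA XA \<longleftrightarrow> (x, y) \<in> Restr RB XB"
    if "x \<in> XA \<inter> XB" "y \<in> XA \<inter> XB" for x y
    using agree[OF that] that by blast
qed

lemma execs_order_merge:
  assumes SA: "(BA, RA) \<in> execs F chan msg" and SB: "(BB, RB) \<in> execs F chan msg"
    and "XA \<subseteq> BA" and "XB \<subseteq> BB"
    and agree: "\<And>x y. x \<in> XA \<inter> XB \<Longrightarrow> y \<in> XA \<inter> XB \<Longrightarrow> (x, y) \<in> RA \<longleftrightarrow> (x, y) \<in> RB"
    and local: "\<And>l. loc_events F chan (XA \<union> XB) l = loc_events F chan BA l
        \<and> loc_events F chan BA l \<subseteq> XA
      \<or> loc_events F chan (XA \<union> XB) l = loc_events F chan BB l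
        \<and> loc_events F chan BB l \<subseteq> XB"
  shows "(XA \<union> XB, order_merge (Restr RA XA) (Restr RB XB)) \<in> execs F chan msg"
proof -
  have systems: "system_of_events (BA, RA)" "system_of_events (BB, RB)"
    using SA SB unfolding execs_def by simp_all
  have agreeing: "agreeing_orders XA XB (Restr RA XA) (Restr RB XB)"
    by (rule agreeing_orders_Restr[OF systems assms(3,4) agree])
  interpret agreeing_orders XA XB "Restr RA XA" "Restr RB XB"
    by (fact agreeing)
  have "system_of_events (XA, Restr RA XA)" "system_of_events (XB, Restr RB XB)"
    using system_of_events_Restr systems assms(3,4) by blast+
  then have "system_of_events (XA \<union> XB, order_merge (Restr RA XA) (Restr RB XB))"
    using agreeing by (rule system_of_events_order_merge)
  then show ?thesis
  proof (rule execsI_locally)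
    fix l
    from local[of l] show "\<exists>(B', R') \<in> execs F chan msg.
      loc_events F chan (XA \<union> XB) l = loc_events F chan B' l
      \<and> Restr (order_merge (Restr RA XA) (Restr RB XB)) (loc_events F chan B' l)
        = Restr R' (loc_events F chan B' l)"
    proof (elim disjE conjE)
      assume "loc_events F chan (XA \<union> XB) l = loc_events F chan BA l"
        and "loc_events F chan BA l \<subseteq> XA"
      moreover from this(2) have "Restr (order_merge (Restr RA XA) (Restr RB XB)) (loc_events F chan BA l)
          = Restr RA (loc_events F chan BA l)"
        using Restr_subset Restr_order_merge_left by metis
      ultimately show ?thesis
        by (intro bexI[OF _ SA]) simp
    next
      assume "loc_events F chan (XA \<union> XB) l = loc_events F chan BB l"
        and "loc_events F chan BB l \<subseteq> XB"
      moreover from this(2) have "Restr (order_merge (Restr RA XA) (Restr RB XB)) (loc_events F chan BB l)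
          = Restr RB (loc_events F chan BB l)"
        using Restr_subset Restr_order_merge_right by metis
      ultimately show ?thesis
        by (intro bexI[OF _ SB]) simp
    qed
  qed
qed

lemma execs_splice:
  assumes "SA \<in> execs F chan msg" and "SB \<in> execs F chan msg"
    and "restrict_sys chan SA K = restrict_sys chan SB K"
    and local: "\<And>l. chans F l \<subseteq> P \<union> K \<or> chans F l \<inter> P = {}"
  obtains M where "M \<in> execs F chan msg"
    and "restrict_sys chan M (P \<union> K) = restrict_sys chan SA (P \<union> K)"
    and "restrict_sys chan M (- P) = restrict_sys chan SB (- P)"
proof -
  obtain BA RA BB RB where SA_eq: "SA = (BA, RA)" and SB_eq: "SB = (BB, RB)"
    by fastforce
  note SA = assms(1)[unfolded SA_eq] and SB = assms(2)[unfolded SB_eq]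
    and agree_K = assms(3)[unfolded SA_eq SB_eq]
  define XA where "XA = {e \<in> BA. chan e \<in> P \<union> K}"
  define XB where "XB = {e \<in> BB. chan e \<in> - P}"
  define R where "R = order_merge (Restr RA XA) (Restr RB XB)"
  have K_events: "e \<in> BA \<longleftrightarrow> e \<in> BB" if "chan e \<in> K" for e
    using restrict_sys_eq_events[OF agree_K that] by simp
  have XA_part: "{e \<in> XA \<union> XB. chan e \<in> P \<union> K} = XA"
    and XB_part: "{e \<in> XA \<union> XB. chan e \<in> - P} = XB"
    unfolding XA_def XB_def using K_events by blast+
  have overlap_agree: "(x, y) \<in> RA \<longleftrightarrow> (x, y) \<in> RB"
    if "x \<in> XA \<inter> XB" "y \<in> XA \<inter> XB" for x y
    using restrict_sys_eq_order[OF agree_K] that unfolding XA_def XB_def by auto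
  have local_M: "loc_events F chan (XA \<union> XB) l = loc_events F chan BA l
      \<and> loc_events F chan BA l \<subseteq> XA
    \<or> loc_events F chan (XA \<union> XB) l = loc_events F chan BB l
      \<and> loc_events F chan BB l \<subseteq> XB" for l
    using local[of l] XA_part XB_part unfolding loc_events_altdef XA_def XB_def by blast
  have XA_sub: "XA \<subseteq> BA" and XB_sub: "XB \<subseteq> BB"
    unfolding XA_def XB_def by blast+
  have systems: "system_of_events (BA, RA)" "system_of_events (BB, RB)"
    using SA SB unfolding execs_def by simp_all
  interpret agreeing_orders XA XB "Restr RA XA" "Restr RB XB"
    by (rule agreeing_orders_Restr[OF systems XA_sub XB_sub overlap_agree])
  have "(XA \<union> XB, R) \<in> execs F chan msg"
    unfolding R_def by (rule execs_order_merge[OF SA SB XA_sub XB_sub overlap_agree local_M])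
  moreover have "restrict_sys chan (XA \<union> XB, R) (P \<union> K) = (XA, Restr RA XA)"
    "restrict_sys chan (XA \<union> XB, R) (- P) = (XB, Restr RB XB)"
    unfolding R_def restrict_sys_altdef fst_conv snd_conv XA_part XB_part
      Restr_order_merge_left Restr_order_merge_right by simp_all
  moreover have "restrict_sys chan SA (P \<union> K) = (XA, Restr RA XA)"
    "restrict_sys chan SB (- P) = (XB, Restr RB XB)"
    unfolding restrict_sys_altdef SA_eq SB_eq XA_def XB_def by simp_all
  ultimately show ?thesis
    using that[of "(XA \<union> XB, R)"] by simp
qed

lemma undirected_path_snoc:
  assumes path: "undirected_path F ls cs"
    and new_edge: "ends F c = Some (last ls, l) \<or> ends F c = Some (l, last ls)"
  shows "undirected_path F (ls @ [l]) (cs @ [c])"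
  unfolding undirected_path_def
proof (intro conjI allI impI)
  have len: "length ls = Suc (length cs)"
    using path unfolding undirected_path_def by simp
  then show "length (ls @ [l]) = Suc (length (cs @ [c]))"
    by simp
  have last_ls: "ls ! length cs = last ls"
    using len by (metis last_conv_nth diff_Suc_1 list.size(3) nat.distinct(1))
  fix k
  assume "k < length (cs @ [c])"
  then consider "k < length cs" | "k = length cs"
    by fastforce
  then show "ends F ((cs @ [c]) ! k) = Some ((ls @ [l]) ! k, (ls @ [l]) ! Suc k)
    \<or> ends F ((cs @ [c]) ! k) = Some ((ls @ [l]) ! Suc k, (ls @ [l]) ! k)"
  proof cases
    case 1
    then show ?thesis
      using path len unfolding undirected_path_def by (simp add: nth_append)
  next
    case 2
    then show ?thesis
      using new_edge len last_ls by (simp add: nth_append)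
  qed
qed

inductive_set reach_avoiding :: "('loc, 'ch, 'd) frame \<Rightarrow> 'ch set \<Rightarrow> 'ch set \<Rightarrow> 'loc set"
  for F K C where
  start: "c \<in> C \<Longrightarrow> is_endpoint F l c \<Longrightarrow> l \<in> reach_avoiding F K C"
| step: "l \<in> reach_avoiding F K C \<Longrightarrow> c \<notin> K \<Longrightarrow> is_endpoint F l c \<Longrightarrow> is_endpoint F l' c
    \<Longrightarrow> l' \<in> reach_avoiding F K C"

lemma reach_avoiding_path:
  assumes "l \<in> reach_avoiding F K C"
  shows "\<exists>ls cs. undirected_path F ls cs \<and> (\<exists>c\<in>C. is_endpoint F (hd ls) c)
    \<and> last ls = l \<and> set cs \<inter> K = {}"
  using assms
proof induction
  case (start c l)
  have "undirected_path F [l] []"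
    unfolding undirected_path_def by simp
  then show ?case
    using start by fastforce
next
  case (step l c l')
  then obtain ls cs where path: "undirected_path F ls cs" "\<exists>c\<in>C. is_endpoint F (hd ls) c"
    "last ls = l" "set cs \<inter> K = {}"
    by blast
  show ?case
  proof (cases "l' = l")
    case False
    then have "ends F c = Some (last ls, l') \<or> ends F c = Some (l', last ls)"
      using step.hyps(3,4) path(3) unfolding is_endpoint_def by auto
    then have "undirected_path F (ls @ [l']) (cs @ [c])"
      by (rule undirected_path_snoc[OF path(1)])
    moreover have "ls \<noteq> []"
      using path(1) unfolding undirected_path_def by auto
    ultimately show ?thesis
      using path step.hyps(2) by (intro exI[of _ "ls @ [l']"] exI[of _ "cs @ [c]"]) auto
  qed (use path in blast)
qed

lemma undirected_cutD:
  assumes "undirected_cut F K Cs Co" and "undirected_path F ls cs"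
    and "c \<in> Co" "is_endpoint F (hd ls) c" and "c' \<in> Cs" "is_endpoint F (last ls) c'"
  shows "set cs \<inter> K \<noteq> {}"
proof -
  have "\<exists>c\<in>Co. is_endpoint F (hd ls) c" "\<exists>c\<in>Cs. is_endpoint F (last ls) c"
    using assms(3-6) by blast+
  then show ?thesis
    using assms(1,2) unfolding undirected_cut_def by blast
qed

lemma reach_avoiding_cut:
  assumes cut: "undirected_cut F K Cs Co" and "l \<in> reach_avoiding F K Co" and "c \<in> Cs"
  shows "\<not> is_endpoint F l c"
proof
  assume "is_endpoint F l c"
  obtain ls cs c' where "undirected_path F ls cs" "c' \<in> Co" "is_endpoint F (hd ls) c'"
    "last ls = l" "set cs \<inter> K = {}"
    using reach_avoiding_path[OF assms(2)] by blast
  then show False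
    using undirected_cutD[OF cut] \<open>c \<in> Cs\<close> \<open>is_endpoint F l c\<close> by blast
qed

lemma undirected_cut_separates:
  assumes cut: "undirected_cut F K Cs Co"
  obtains P where "Co \<subseteq> P" and "P \<inter> Cs = {}"
    and "\<And>l. chans F l \<subseteq> P \<union> K \<or> chans F l \<inter> P = {}"
proof
  let ?R = "reach_avoiding F K Co"
  define P where "P = Co \<union> {c. c \<notin> K \<and> (\<exists>l\<in>?R. is_endpoint F l c)}"
  show "Co \<subseteq> P"
    unfolding P_def by blast
  have "Co \<inter> Cs = {}"
    using cut unfolding undirected_cut_def by blast
  then show "P \<inter> Cs = {}"
    using reach_avoiding_cut[OF cut] unfolding P_def by blast
  show "chans F l \<subseteq> P \<union> K \<or> chans F l \<inter> P = {}" for l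
  proof (cases "l \<in> ?R")
    case True
    then show ?thesis
      unfolding P_def chans_def by blast
  next
    case False
    have "c \<notin> P" if "is_endpoint F l c" for c
      using False that reach_avoiding.start[of c Co F l K] reach_avoiding.step[of _ F K Co c l]
      unfolding P_def by blast
    then show ?thesis
      unfolding chans_def by blast
  qed
qed

lemma mem_compat_iff:
  "B' \<in> compat F chan msg C C' B
    \<longleftrightarrow> (\<exists>A \<in> execs F chan msg. restrict_sys chan A C = B \<and> restrict_sys chan A C' = B')"
  unfolding compat_def by blast

lemma compat_subset_runs: "compat F chan msg C C' B \<subseteq> runs F chan msg C'"
  unfolding compat_def runs_def by blast

lemma compat_through_cut:
  assumes "undirected_cut F K Cs Co"
  shows "compat F chan msg Co Cs Bo
    = (\<Union>Bk \<in> compat F chan msg Co K Bo. compat F chan msg K Cs Bk)"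
proof
  show "compat F chan msg Co Cs Bo \<subseteq> (\<Union>Bk \<in> compat F chan msg Co K Bo. compat F chan msg K Cs Bk)"
  proof
    fix B
    assume "B \<in> compat F chan msg Co Cs Bo"
    then obtain A where "A \<in> execs F chan msg" "restrict_sys chan A Co = Bo" "restrict_sys chan A Cs = B"
      unfolding mem_compat_iff by blast
    then have "restrict_sys chan A K \<in> compat F chan msg Co K Bo"
      and "B \<in> compat F chan msg K Cs (restrict_sys chan A K)"
      unfolding mem_compat_iff by blast+
    then show "B \<in> (\<Union>Bk \<in> compat F chan msg Co K Bo. compat F chan msg K Cs Bk)"
      by blast
  qed
  obtain P where Co_sub: "Co \<subseteq> P" and Cs_disj: "P \<inter> Cs = {}"
    and local: "\<And>l. chans F l \<subseteq> P \<union> K \<or> chans F l \<inter> P = {}"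
    using undirected_cut_separates[OF assms] by blast
  show "(\<Union>Bk \<in> compat F chan msg Co K Bo. compat F chan msg K Cs Bk) \<subseteq> compat F chan msg Co Cs Bo"
  proof
    fix B
    assume "B \<in> (\<Union>Bk \<in> compat F chan msg Co K Bo. compat F chan msg K Cs Bk)"
    then obtain Bk where "Bk \<in> compat F chan msg Co K Bo" "B \<in> compat F chan msg K Cs Bk"
      by blast
    then obtain A A' where A: "A \<in> execs F chan msg" "restrict_sys chan A Co = Bo"
      and A': "A' \<in> execs F chan msg" "restrict_sys chan A' K = restrict_sys chan A K"
      and B: "restrict_sys chan A' Cs = B"
      unfolding mem_compat_iff by metis
    obtain M where M: "M \<in> execs F chan msg"
      "restrict_sys chan M (P \<union> K) = restrict_sys chan A (P \<union> K)"
      "restrict_sys chan M (- P) = restrict_sys chan A' (- P)"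
      using execs_splice[OF A(1) A'(1) A'(2)[symmetric] local] by blast
    have "restrict_sys chan M Co = Bo"
      using restrict_sys_eq_subset[OF _ M(2)] Co_sub A(2) by blast
    moreover have "restrict_sys chan M Cs = B"
      using restrict_sys_eq_subset[OF _ M(3)] Cs_disj B by blast
    ultimately show "B \<in> compat F chan msg Co Cs Bo"
      unfolding mem_compat_iff using M(1) by blast
  qed
qed

lemma blurred_Union:
  assumes "blur_operator D f" and "\<S> \<subseteq> Pow D" and "\<And>S. S \<in> \<S> \<Longrightarrow> f S = S"
  shows "blurred D f (\<Union>\<S>)"
proof -
  have "f (\<Union>\<S>) = \<Union>(f ` \<S>)"
    using assms(1,2) unfolding blur_operator_def by blast
  also have "\<dots> = \<Union>\<S>"
    using assms(3) by simp
  finally show ?thesis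
    using assms(1) unfolding blurred_def by simp
qed

theorem theorem2:
  fixes F :: "('loc, 'ch, 'd) frame"
    and chan :: "'e \<Rightarrow> 'ch" and msg :: "'e \<Rightarrow> 'd"
    and Cs Ccut Co :: "'ch set"
    and f :: "'e sys set \<Rightarrow> 'e sys set"
  assumes "wf_frame F"
    and "undirected_cut F Ccut Cs Co"
    and "\<forall>S. S \<subseteq> runs F chan msg Cs \<longrightarrow> f S \<subseteq> runs F chan msg Cs"
    and "limits_flow F chan msg f Cs Ccut"
  shows "limits_flow F chan msg f Cs Co"
proof -
  have blur: "blur_operator (runs F chan msg Cs) f"
    and cut_blurred: "\<And>Bk. Bk \<in> runs F chan msg Ccut
      \<Longrightarrow> f (compat F chan msg Ccut Cs Bk) = compat F chan msg Ccut Cs Bk"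
    using assms(4) unfolding limits_flow_def blurred_def by auto
  have "blurred (runs F chan msg Cs) f (compat F chan msg Co Cs Bo)" for Bo
  proof -
    have "compat F chan msg Ccut Cs ` compat F chan msg Co Ccut Bo \<subseteq> Pow (runs F chan msg Cs)"
      using compat_subset_runs by blast
    moreover have "f S = S" if "S \<in> compat F chan msg Ccut Cs ` compat F chan msg Co Ccut Bo" for S
      using that compat_subset_runs cut_blurred by blast
    ultimately show ?thesis
      unfolding compat_through_cut[OF assms(2)] by (rule blurred_Union[OF blur])
  qed
  with blur show ?thesis
    unfolding limits_flow_def by blast
qed

end
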